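(* There exist a meromorphic function $f:\mathbb{D}\to\mathbb{P}$ of bounded Nevanlinna characteristic (i.e. $\sup_{r<1}T(f;r)<\infty$) and $\theta\in\mathbb{R}$ such that, with $\gamma(t)=\tanh(\frac t2)e^{i\theta}$ and $L_S(\rho_0)=\int_0^{\rho_0}\|f'(\gamma(t))\|_{H\to S}\,dt$, one has $L_S(\rho_0)/\rho_0\to\infty$ as $\rho_0\to\infty$; in particular $L_S(\rho_0)\neq O(\rho_0)$.
   Context: $\mathbb{D}=\{|z|<1\}$ carries the hyperbolic metric with density $\lambda_H(z)=2/(1-|z|^2)$; $\mathbb{P}=\mathbb{C}\cup\{\infty\}$ carries the spherical metric with density $\lambda_S(w)=2/(1+|w|^2)$; $\|f'(z)\|_{H\to S}=\frac{2|f'(z)|}{1+|f(z)|^2}\cdot\frac{1-|z|^2}{2}$ (extended continuously at poles). The Nevanlinna characteristic is $T(f;r)=\int_0^r S(f;s)\frac{ds}{s}$ with $S(f;s)=\frac{1}{4\pi}\int_{|z|<s}|f'(z)|^2\lambda_S(f(z))^2\,dx\,dy$. *)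

theory Defs
  imports "HOL-Analysis.Analysis" "HOL-Library.Landau_Symbols"
begin

text \<open>Meromorphic function on the unit disc, represented as f :: complex => complex
  together with a pole set P (discrete in the disc); the values of f at the poles are
  irrelevant (they stand for the point at infinity).\<close>
definition meromorphic_disc :: "(complex \<Rightarrow> complex) \<Rightarrow> bool" where
  "meromorphic_disc f \<longleftrightarrow>
     (\<exists>P. P \<subseteq> ball 0 1 \<and> (\<forall>z\<in>ball 0 1. \<not> z islimpt P) \<and>
          f holomorphic_on (ball 0 1 - P) \<and>
          (\<forall>p\<in>P. \<exists>r>0. \<exists>g. g holomorphic_on ball p r \<and> g p = 0 \<and>
                 (\<forall>z\<in>ball p r - {p}. g z \<noteq> 0 \<and> f z = inverse (g z))))"

text \<open>Hyperbolic-to-spherical derivative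
  2|f'(z)|/(1+|f(z)|^2) * (1-|z|^2)/2, extended continuously (taken as a limit).\<close>
definition sph_deriv :: "(complex \<Rightarrow> complex) \<Rightarrow> complex \<Rightarrow> real" where
  "sph_deriv f z = Lim (at z)
     (\<lambda>w. (2 * cmod (deriv f w) / (1 + (cmod (f w))\<^sup>2)) * ((1 - (cmod w)\<^sup>2) / 2))"

definition nev_S :: "(complex \<Rightarrow> complex) \<Rightarrow> real \<Rightarrow> ennreal" where
  "nev_S f s = (\<integral>\<^sup>+ z. ennreal ((cmod (deriv f z))\<^sup>2 * (2 / (1 + (cmod (f z))\<^sup>2))\<^sup>2)
                    * indicator (ball 0 s) z \<partial>lborel) / ennreal (4 * pi)"

definition nev_T :: "(complex \<Rightarrow> complex) \<Rightarrow> real \<Rightarrow> ennreal" where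
  "nev_T f r = (\<integral>\<^sup>+ s. nev_S f s * ennreal (1 / s) * indicator {0<..<r} s \<partial>lborel)"

definition bounded_characteristic :: "(complex \<Rightarrow> complex) \<Rightarrow> bool" where
  "bounded_characteristic f \<longleftrightarrow> (\<exists>B::real. \<forall>r. 0 < r \<and> r < 1 \<longrightarrow> nev_T f r \<le> ennreal B)"

definition geo_ray :: "real \<Rightarrow> real \<Rightarrow> complex" where
  "geo_ray \<theta> t = complex_of_real (tanh (t / 2)) * cis \<theta>"

definition L_S :: "(complex \<Rightarrow> complex) \<Rightarrow> real \<Rightarrow> real \<Rightarrow> real" where
  "L_S f \<theta> \<rho> = integral {0..\<rho>} (\<lambda>t. sph_deriv f (geo_ray \<theta> t))"

end

theory Submission
  imports Defs "HOL-Complex_Analysis.Cauchy_Integral_Formula" "HOL-Real_Asymp.Real_Asymp"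
begin

(*
  The witness is  f(z) = exp(i (1 - z)^(-1/4))  on the unit disc, with theta = 0.

  On the radius [0,1) the quantity (1 - r)^(-1/4) is real,
  so |f| = 1 there and the hyperbolic-to-spherical derivative reduces to
  |f'(r)| (1 - r^2)/2 = (1/4)(1 - r)^(-5/4) (1 - r^2)/2.  Along gamma(t) = tanh(t/2) this is the
  t-derivative of (1 - tanh(t/2))^(-1/4), so L_S(rho) = (1 - tanh(rho/2))^(-1/4) - 1, which grows
  like e^(rho/4) and is therefore superlinear.

  Since 2|f|/(1+|f|^2) <= 1, the spherical area density satisfies
  |f'|^2 lambda_S(f)^2 <= (1/16)|1 - z|^(-5/2) <= (1/16)(1 - x)^(-7/4) |y|^(-3/4)  (z = x + iy).
  The right-hand side is a product, so its integral over the square containing |z| < s is a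
  product of two one-dimensional power integrals; this gives
  S(f;s) <= s^(1/4)(1 - s)^(-3/4)/(6 pi), hence S(f;s)/s is dominated by an integrable function
  of s on (0,1) and T(f;r) <= 8/(3 pi) for all r < 1.
*)

lemma has_integral_reflected_powr:
  fixes a b c q :: real
  assumes "a \<le> b" "b \<le> c" "q \<noteq> -1" "b < c \<or> -1 < q"
  shows "((\<lambda>y. (c - y) powr q) has_integral
           ((c - a) powr (q + 1) - (c - b) powr (q + 1)) / (q + 1)) {a..b}"
proof -
  define F where "F y = - ((c - y) powr (q + 1)) / (q + 1)" for y
  have "((\<lambda>y. (c - y) powr q) has_integral (F b - F a)) {a..b}"
  proof (rule fundamental_theorem_of_calculus_interior[OF assms(1)])
    have "continuous_on {a..b} (\<lambda>y. (c - y) powr (q + 1))"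
      using assms by (intro continuous_on_powr') (auto intro!: continuous_intros)
    then show "continuous_on {a..b} F"
      unfolding F_def using assms(3)
      by (intro continuous_on_divide continuous_on_minus continuous_on_const) auto
  next
    fix x assume x: "x \<in> {a<..<b}"
    have "(F has_real_derivative - ((q + 1) * (c - x) powr (q + 1 - 1) * - 1) / (q + 1)) (at x)"
      unfolding F_def using x assms(2) by (auto intro!: derivative_eq_intros)
    moreover have "q + 1 \<noteq> 0" using assms(3) by linarith
    ultimately have "(F has_real_derivative (c - x) powr q) (at x)"
      by simp
    then show "(F has_vector_derivative (c - x) powr q) (at x)"
      by (simp add: has_real_derivative_iff_has_vector_derivative)
  qed
  then show ?thesis
    by (simp add: F_def diff_divide_distrib)
qed

lemma has_integral_powr_from_0:
  fixes s q :: real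
  assumes "0 \<le> s" "-1 < q"
  shows "((\<lambda>y. y powr q) has_integral s powr (q + 1) / (q + 1)) {0..s}"
proof -
  have "((\<lambda>y. (0 - y) powr q) has_integral s powr (q + 1) / (q + 1)) {-s..0}"
    using has_integral_reflected_powr[of "-s" 0 0 q] assms by simp
  then show ?thesis
    by (subst has_integral_reflect_real[symmetric]) simp
qed

lemma has_integral_abs_powr:
  fixes s q :: real
  assumes "0 \<le> s" "-1 < q"
  shows "((\<lambda>y. \<bar>y\<bar> powr q) has_integral 2 * s powr (q + 1) / (q + 1)) {-s..s}"
proof -
  have "((\<lambda>y. (0 - y) powr q) has_integral s powr (q + 1) / (q + 1)) {-s..0}"
    using has_integral_reflected_powr[of "-s" 0 0 q] assms by simp
  then have left: "((\<lambda>y. \<bar>y\<bar> powr q) has_integral s powr (q + 1) / (q + 1)) {-s..0}"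
    by (rule has_integral_eq[rotated]) simp
  have "((\<lambda>y. \<bar>y\<bar> powr q) has_integral s powr (q + 1) / (q + 1)) {0..s}"
    using has_integral_powr_from_0[OF assms] by (rule has_integral_eq[rotated]) simp
  with left have "((\<lambda>y. \<bar>y\<bar> powr q) has_integral
                    s powr (q + 1) / (q + 1) + s powr (q + 1) / (q + 1)) {-s..s}"
    using assms by (intro has_integral_combine[of "-s" 0 s]) auto
  then show ?thesis by simp
qed

lemma nn_integral_interval_eq:
  fixes f :: "real \<Rightarrow> real"
  assumes "(f has_integral I) {a..b}" "\<And>x. x \<in> {a..b} \<Longrightarrow> 0 \<le> f x"
    and [measurable]: "f \<in> borel_measurable borel"
  shows "(\<integral>\<^sup>+x. ennreal (if x \<in> {a..b} then f x else 0) \<partial>lborel) = ennreal I"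
proof (rule nn_integral_has_integral_lborel)
  show "(\<lambda>x. if x \<in> {a..b} then f x else 0) \<in> borel_measurable borel" by measurable
  show "0 \<le> (if x \<in> {a..b} then f x else 0)" for x using assms(2) by auto
  show "((\<lambda>x. if x \<in> {a..b} then f x else 0) has_integral I) UNIV"
    using assms(1) by (rule has_integral_restrict_UNIV[THEN iffD2])
qed

lemma sph_deriv_holomorphic:
  assumes "f holomorphic_on S" "open S" "z \<in> S"
  shows "sph_deriv f z = (2 * cmod (deriv f z) / (1 + (cmod (f z))\<^sup>2)) * ((1 - (cmod z)\<^sup>2) / 2)"
proof -
  have "isCont f z" "isCont (deriv f) z"
    using assms holomorphic_deriv[OF assms(1,2)]
    by (meson continuous_on_eq_continuous_at holomorphic_on_imp_continuous_on)+
  then have "isCont (\<lambda>w. (2 * cmod (deriv f w) / (1 + (cmod (f w))\<^sup>2)) * ((1 - (cmod w)\<^sup>2) / 2)) z"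
    by (intro continuous_intros) (auto simp: add_nonneg_eq_0_iff)
  then show ?thesis
    unfolding sph_deriv_def isCont_def by (intro tendsto_Lim) auto
qed

lemma spherical_factor_le_1:
  fixes m :: real
  assumes "0 \<le> m"
  shows "2 * m / (1 + m\<^sup>2) \<le> 1"
proof -
  have "2 * m \<le> 1 + m\<^sup>2"
    using power2_diff[of m 1] zero_le_power2[of "m - 1"] by simp
  then show ?thesis by (simp add: add_pos_nonneg)
qed

lemma superlinear_not_bigo:
  fixes g :: "real \<Rightarrow> real"
  assumes "filterlim (\<lambda>x. g x / x) at_top at_top"
  shows "g \<notin> O(\<lambda>x. x)"
proof
  assume "g \<in> O(\<lambda>x. x)"
  then obtain c where "eventually (\<lambda>x. norm (g x) \<le> c * norm x) at_top"
    by (elim landau_o.bigE)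
  moreover have "eventually (\<lambda>x. c < g x / x) at_top"
    using assms by (simp add: filterlim_at_top_dense)
  moreover have "eventually (\<lambda>x::real. 0 < x) at_top"
    by (rule eventually_gt_at_top)
  ultimately have "eventually (\<lambda>x::real. False) at_top"
    by eventually_elim (auto simp: field_simps)
  then show False by simp
qed

section \<open>The example function\<close>

definition example_fn :: "complex \<Rightarrow> complex" where
  "example_fn z = exp (\<i> * (1 - z) powr (-1/4))"

lemma one_minus_disc_not_nonpos:
  fixes z :: complex
  assumes "z \<in> ball 0 1"
  shows "1 - z \<notin> \<real>\<^sub>\<le>\<^sub>0"
proof
  assume "1 - z \<in> \<real>\<^sub>\<le>\<^sub>0"
  then have "Re (1 - z) \<le> 0" by (auto simp: nonpos_Reals_def complex_eq_iff)
  moreover have "\<bar>Re z\<bar> < 1" using assms abs_Re_le_cmod[of z] by simp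
  ultimately show False by simp
qed

lemma example_fn_has_derivative:
  assumes "z \<in> ball 0 1"
  shows "(example_fn has_field_derivative \<i> * (1/4) * (1 - z) powr (-5/4) * example_fn z) (at z)"
proof -
  have "((\<lambda>w. w powr (-1/4)) has_field_derivative (-1/4) * (1 - z) powr (-1/4 - 1)) (at (1 - z))"
    by (rule has_field_derivative_powr[OF one_minus_disc_not_nonpos[OF assms]])
  then have "((\<lambda>w. \<i> * (1 - w) powr (-1/4)) has_field_derivative
               \<i> * ((-1/4) * (1 - z) powr (-1/4 - 1) * -1)) (at z)"
    by (intro DERIV_cmult DERIV_chain2[where g = "\<lambda>w. 1 - w"]) (auto intro!: derivative_eq_intros)
  from DERIV_chain2[OF DERIV_exp this] show ?thesis
    unfolding example_fn_def by (simp add: mult_ac)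
qed

lemma example_fn_holomorphic: "example_fn holomorphic_on ball 0 1"
  using example_fn_has_derivative holomorphic_on_open open_ball by blast

lemma norm_deriv_example_fn:
  assumes "z \<in> ball 0 1"
  shows "cmod (deriv example_fn z) = (1/4) * cmod (1 - z) powr (-5/4) * cmod (example_fn z)"
  unfolding DERIV_imp_deriv[OF example_fn_has_derivative[OF assms]]
  by (simp add: norm_mult norm_powr_real_powr')

text \<open>On the radius (1 - r)^(-1/4) is real, so the example has modulus 1 there.\<close>
lemma norm_example_fn_real:
  fixes r :: real
  assumes "r < 1"
  shows "cmod (example_fn (of_real r)) = 1"
proof -
  have "(1 - complex_of_real r) powr (-1/4) = of_real ((1 - r) powr (-1/4))"
    using assms by (simp add: powr_of_real[symmetric])
  then show ?thesis
    unfolding example_fn_def by (simp only: norm_exp_i_times)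
qed

section \<open>Spherical length along the ray\<close>

text \<open>Along the ray theta = 0, where |f| = 1, the spherical derivative is |f'| (1 - r^2)/2.\<close>
lemma sph_deriv_example_fn_ray:
  "sph_deriv example_fn (geo_ray 0 t) =
     (1/4) * (1 - tanh (t/2)) powr (-5/4) * ((1 - (tanh (t/2))\<^sup>2) / 2)"
proof -
  define r where "r = tanh (t/2)"
  have r: "\<bar>r\<bar> < 1"
    unfolding r_def by (simp add: abs_less_iff tanh_real_lt_1 tanh_real_gt_neg1)
  then have disc: "complex_of_real r \<in> ball 0 1" by simp
  have "cmod (1 - complex_of_real r) = 1 - r"
    using r by (metis abs_of_pos abs_less_iff diff_gt_0_iff_gt norm_of_real of_real_1 of_real_diff)
  then show ?thesis
    using r unfolding r_def[symmetric]
    by (simp add: geo_ray_def r_def[symmetric] disc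
        sph_deriv_holomorphic[OF example_fn_holomorphic open_ball disc]
        norm_deriv_example_fn[OF disc] norm_example_fn_real)
qed

text \<open>The integrand above is the derivative of (1 - tanh(t/2))^(-1/4), which gives L_S in closed form.\<close>
lemma L_S_example_fn:
  assumes "0 \<le> \<rho>"
  shows "L_S example_fn 0 \<rho> = (1 - tanh (\<rho>/2)) powr (-1/4) - 1"
proof -
  define F where "F t = (1 - tanh (t/2)) powr (-1/4)" for t :: real
  have "((\<lambda>t. sph_deriv example_fn (geo_ray 0 t)) has_integral F \<rho> - F 0) {0..\<rho>}"
  proof (rule fundamental_theorem_of_calculus[OF assms])
    fix x assume "x \<in> {0..\<rho>}"
    have "tanh (x/2) < 1" by (simp add: tanh_real_lt_1)
    then have "(F has_real_derivative
        (-1/4) * (1 - tanh (x/2)) powr (-1/4 - 1) * - ((1 - (tanh (x/2))\<^sup>2) * (1/2))) (at x)"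
      unfolding F_def by (auto intro!: derivative_eq_intros simp: power2_eq_square)
    then have "(F has_real_derivative sph_deriv example_fn (geo_ray 0 x)) (at x)"
      unfolding sph_deriv_example_fn_ray by (simp add: field_simps)
    then show "(F has_vector_derivative sph_deriv example_fn (geo_ray 0 x)) (at x within {0..\<rho>})"
      by (simp add: has_real_derivative_iff_has_vector_derivative has_vector_derivative_at_within)
  qed
  then show ?thesis
    unfolding L_S_def F_def by (simp add: integral_unique)
qed

text \<open>(1 - tanh(rho/2))^(-1/4) behaves like e^(rho/4), so L_S(rho)/rho tends to infinity.\<close>
lemma L_S_example_fn_superlinear:
  "filterlim (\<lambda>\<rho>. L_S example_fn 0 \<rho> / \<rho>) at_top at_top"
proof -
  have "filterlim (\<lambda>\<rho>::real. ((1 - tanh (\<rho>/2)) powr (-1/4) - 1) / \<rho>) at_top at_top"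
    by real_asymp
  moreover have "eventually (\<lambda>\<rho>. ((1 - tanh (\<rho>/2)) powr (-1/4) - 1) / \<rho> =
                                 L_S example_fn 0 \<rho> / \<rho>) at_top"
    using eventually_ge_at_top[of "0::real"] by eventually_elim (simp add: L_S_example_fn)
  ultimately show ?thesis
    by (rule filterlim_cong[THEN iffD1, OF refl refl, rotated])
qed

section \<open>Bounded characteristic\<close>

lemma example_fn_density_le:
  assumes "z \<in> ball 0 1"
  shows "(cmod (deriv example_fn z))\<^sup>2 * (2 / (1 + (cmod (example_fn z))\<^sup>2))\<^sup>2
           \<le> (1/16) * cmod (1 - z) powr (-5/2)"
proof -
  define m where "m = cmod (example_fn z)"
  define c where "c = cmod (1 - z)"
  have "0 < c" unfolding c_def using assms by auto
  then have c_sq: "(c powr (-5/4))\<^sup>2 = c powr (-5/2)"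
    by (simp add: power2_eq_square powr_add[symmetric])
  have factor: "(2 * m / (1 + m\<^sup>2))\<^sup>2 \<le> 1"
    using spherical_factor_le_1[of m] unfolding m_def by (simp add: power_le_one)
  have "(cmod (deriv example_fn z))\<^sup>2 * (2 / (1 + (cmod (example_fn z))\<^sup>2))\<^sup>2
          = (1/16) * c powr (-5/2) * (2 * m / (1 + m\<^sup>2))\<^sup>2"
    unfolding norm_deriv_example_fn[OF assms] m_def[symmetric] c_def[symmetric] c_sq[symmetric]
    by (simp add: power_mult_distrib power_divide)
  also have "\<dots> \<le> (1/16) * c powr (-5/2)"
    using mult_left_mono[OF factor, of "(1/16) * c powr (-5/2)"] by simp
  finally show ?thesis unfolding c_def .
qed

text \<open>Splitting |1 - z|^(-5/2) into a product of a function of Re z and a function of Im z,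
  using that both 1 - Re z and |Im z| are at most |1 - z|.\<close>
lemma norm_one_minus_powr_le_product:
  fixes z :: complex
  assumes "Re z < 1" "Im z \<noteq> 0"
  shows "cmod (1 - z) powr (-5/2) \<le> (1 - Re z) powr (-7/4) * \<bar>Im z\<bar> powr (-3/4)"
proof -
  define c where "c = cmod (1 - z)"
  define a where "a = 1 - Re z"
  define y where "y = \<bar>Im z\<bar>"
  have a: "0 < a" "a \<le> c"
    unfolding a_def c_def using assms complex_Re_le_cmod[of "1 - z"] by auto
  have y: "0 < y" "y \<le> c"
    unfolding y_def c_def using assms abs_Im_le_cmod[of "1 - z"] by auto
  have "a powr (7/4) * y powr (3/4) \<le> c powr (7/4) * c powr (3/4)"
    using a y by (intro mult_mono powr_mono2) auto
  also have "\<dots> = c powr (5/2)" by (simp add: powr_add[symmetric])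
  finally have "inverse (c powr (5/2)) \<le> inverse (a powr (7/4) * y powr (3/4))"
    using a y by (intro le_imp_inverse_le) auto
  then show ?thesis
    unfolding a_def y_def c_def by (simp add: powr_minus)
qed

text \<open>The two factors of the majorant on the square [-s,s]^2, which contains the disc |z| < s.
  The value top on the line Im z = 0 (a null set) covers the points where the splitting
  above is not available.\<close>
definition re_majorant :: "real \<Rightarrow> real \<Rightarrow> ennreal" where
  "re_majorant s x = ennreal (if x \<in> {-s..s} then (1/16) * (1 - x) powr (-7/4) else 0)"

definition im_majorant :: "real \<Rightarrow> real \<Rightarrow> ennreal" where
  "im_majorant s y = (if y = 0 then top else ennreal (if y \<in> {-s..s} then \<bar>y\<bar> powr (-3/4) else 0))"

lemma re_majorant_measurable [measurable]: "re_majorant s \<in> borel_measurable borel"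
  unfolding re_majorant_def by measurable

lemma im_majorant_measurable [measurable]: "im_majorant s \<in> borel_measurable borel"
  unfolding im_majorant_def by measurable

lemma example_fn_density_le_majorant:
  assumes "0 < s" "s < 1"
  shows "ennreal ((cmod (deriv example_fn z))\<^sup>2 * (2 / (1 + (cmod (example_fn z))\<^sup>2))\<^sup>2)
           * indicator (ball 0 s) z \<le> re_majorant s (Re z) * im_majorant s (Im z)"
proof (cases "z \<in> ball 0 s")
  case False
  then show ?thesis by simp
next
  case True
  then have z: "z \<in> ball 0 1" using assms by auto
  have square: "Re z \<in> {-s..s}" "Im z \<in> {-s..s}"
    using True abs_Re_le_cmod[of z] abs_Im_le_cmod[of z] by auto
  then have "Re z < 1" using assms by auto
  have re: "re_majorant s (Re z) = ennreal ((1/16) * (1 - Re z) powr (-7/4))"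
    using square unfolding re_majorant_def by simp
  show ?thesis
  proof (cases "Im z = 0")
    case True
    have "re_majorant s (Re z) \<noteq> 0" unfolding re using \<open>Re z < 1\<close> by simp
    then have "re_majorant s (Re z) * im_majorant s (Im z) = top"
      using True unfolding im_majorant_def by (simp add: ennreal_mult_top)
    then show ?thesis by simp
  next
    case False
    have "(cmod (deriv example_fn z))\<^sup>2 * (2 / (1 + (cmod (example_fn z))\<^sup>2))\<^sup>2
            \<le> (1/16) * ((1 - Re z) powr (-7/4) * \<bar>Im z\<bar> powr (-3/4))"
      using example_fn_density_le[OF z] norm_one_minus_powr_le_product[OF \<open>Re z < 1\<close> False]
      by linarith
    moreover have "re_majorant s (Re z) * im_majorant s (Im z)
        = ennreal ((1/16) * (1 - Re z) powr (-7/4) * \<bar>Im z\<bar> powr (-3/4))"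
      using False square unfolding re im_majorant_def by (simp add: ennreal_mult[symmetric])
    ultimately show ?thesis
      using True by (simp add: ennreal_leI mult.assoc)
  qed
qed

lemma nn_integral_re_majorant:
  assumes "0 \<le> s" "s < 1"
  shows "(\<integral>\<^sup>+x. re_majorant s x \<partial>lborel) \<le> ennreal ((1 - s) powr (-3/4) / 12)"
proof -
  have "((\<lambda>x. (1/16) * (1 - x) powr (-7/4)) has_integral
          (1/16) * (((1 + s) powr (-3/4) - (1 - s) powr (-3/4)) / (-3/4))) {-s..s}"
    using has_integral_reflected_powr[of "-s" s 1 "-7/4"] assms
    by (intro has_integral_mult_right) simp
  from nn_integral_interval_eq[OF this]
  have "(\<integral>\<^sup>+x. re_majorant s x \<partial>lborel)
          = ennreal ((1/16) * (((1 + s) powr (-3/4) - (1 - s) powr (-3/4)) / (-3/4)))"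
    unfolding re_majorant_def by auto
  also have "\<dots> \<le> ennreal ((1 - s) powr (-3/4) / 12)"
    using powr_ge_zero[of "1 + s" "-3/4"] by (intro ennreal_leI) (simp add: field_simps)
  finally show ?thesis .
qed

text \<open>The y-factor: int_{-s}^{s} |y|^(-3/4) dy = 8 s^(1/4); the point y = 0 is a null set.\<close>
lemma nn_integral_im_majorant:
  assumes "0 \<le> s"
  shows "(\<integral>\<^sup>+y. im_majorant s y \<partial>lborel) = ennreal (8 * s powr (1/4))"
proof -
  have "(\<integral>\<^sup>+y. im_majorant s y \<partial>lborel)
          = (\<integral>\<^sup>+y. ennreal (if y \<in> {-s..s} then \<bar>y\<bar> powr (-3/4) else 0) \<partial>lborel)"
    by (rule nn_integral_cong_AE)
       (use AE_lborel_singleton[of 0] in \<open>eventually_elim, simp add: im_majorant_def\<close>)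
  also have "\<dots> = ennreal (8 * s powr (1/4))"
    using has_integral_abs_powr[of s "-3/4"] assms
    by (subst nn_integral_interval_eq) auto
  finally show ?thesis .
qed

lemma nn_integral_product_majorant:
  "(\<integral>\<^sup>+z. re_majorant s (Re z) * im_majorant s (Im z) \<partial>lborel)
     = (\<integral>\<^sup>+x. re_majorant s x \<partial>lborel) * (\<integral>\<^sup>+y. im_majorant s y \<partial>lborel)"
proof -
  let ?f = "\<lambda>b::complex. if b = 1 then re_majorant s else im_majorant s"
  have "(\<integral>\<^sup>+z. (\<Prod>b\<in>Basis. ?f b (z \<bullet> b)) \<partial>lborel) = (\<Prod>b\<in>Basis. (\<integral>\<^sup>+x. ?f b x \<partial>lborel))"
    by (rule nn_integral_lborel_prod) auto
  then show ?thesis by (simp add: Basis_complex_def inner_complex_def)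
qed

lemma nev_S_example_fn_le:
  assumes "0 < s" "s < 1"
  shows "nev_S example_fn s \<le> ennreal (s powr (1/4) * (1 - s) powr (-3/4) / (6 * pi))"
proof -
  have "(\<integral>\<^sup>+z. ennreal ((cmod (deriv example_fn z))\<^sup>2 * (2 / (1 + (cmod (example_fn z))\<^sup>2))\<^sup>2)
             * indicator (ball 0 s) z \<partial>lborel)
          \<le> (\<integral>\<^sup>+z. re_majorant s (Re z) * im_majorant s (Im z) \<partial>lborel)"
    by (intro nn_integral_mono example_fn_density_le_majorant assms)
  also have "\<dots> \<le> ennreal ((1 - s) powr (-3/4) / 12) * ennreal (8 * s powr (1/4))"
    unfolding nn_integral_product_majorant nn_integral_im_majorant[OF less_imp_le[OF assms(1)]]
    using assms by (intro mult_right_mono nn_integral_re_majorant) auto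
  also have "\<dots> = ennreal (s powr (1/4) * (1 - s) powr (-3/4) * (2/3))"
    by (simp add: ennreal_mult[symmetric])
  finally have "nev_S example_fn s \<le> ennreal (s powr (1/4) * (1 - s) powr (-3/4) * (2/3)) / ennreal (4 * pi)"
    unfolding nev_S_def by (rule divide_right_mono_ennreal)
  also have "\<dots> = ennreal (s powr (1/4) * (1 - s) powr (-3/4) / (6 * pi))"
    by (subst divide_ennreal) auto
  finally show ?thesis .
qed

text \<open>The Beta-type weight s^(-3/4)(1-s)^(-3/4) is dominated by the sum of its two
  endpoint singularities, which are separately integrable.\<close>
lemma powr_product_le_sum:
  fixes s :: real
  assumes "0 < s" "s < 1"
  shows "s powr (-3/4) * (1 - s) powr (-3/4) \<le> 2 * (s powr (-3/4) + (1 - s) powr (-3/4))"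
proof -
  have half: "(1/2::real) powr (-3/4) \<le> 2"
  proof -
    have "(1/2::real) powr (-3/4) = 2 powr (3/4)" by (simp add: powr_minus_divide powr_divide)
    also have "\<dots> \<le> 2 powr 1" by (intro powr_mono) auto
    finally show ?thesis by simp
  qed
  show ?thesis
  proof (cases "s \<le> 1/2")
    case True
    then have "(1 - s) powr (-3/4) \<le> 2"
      using assms half powr_mono2'[of "-3/4" "1/2" "1 - s"] by auto
    then have "s powr (-3/4) * (1 - s) powr (-3/4) \<le> s powr (-3/4) * 2"
      by (intro mult_left_mono) auto
    then show ?thesis using powr_ge_zero[of "1 - s" "-3/4"] by (simp only: distrib_left; linarith)
  next
    case False
    then have "s powr (-3/4) \<le> 2"
      using assms half powr_mono2'[of "-3/4" "1/2" s] by auto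
    then have "s powr (-3/4) * (1 - s) powr (-3/4) \<le> 2 * (1 - s) powr (-3/4)"
      by (intro mult_right_mono) auto
    then show ?thesis using powr_ge_zero[of s "-3/4"] by (simp only: distrib_left; linarith)
  qed
qed

text \<open>An integrable majorant of S(f;s)/s on (0,1), with integral 8/(3 pi).\<close>
definition T_majorant :: "real \<Rightarrow> real" where
  "T_majorant s = (s powr (-3/4) + (1 - s) powr (-3/4)) / (3 * pi)"

lemma T_majorant_has_integral: "(T_majorant has_integral 8 / (3 * pi)) {0..1}"
proof -
  have "((\<lambda>s::real. s powr (-3/4) + (1 - s) powr (-3/4)) has_integral 4 + 4) {0..1}"
    using has_integral_powr_from_0[of 1 "-3/4"] has_integral_reflected_powr[of 0 1 1 "-3/4"]
    by (intro has_integral_add) simp_all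
  then show ?thesis
    unfolding T_majorant_def by (intro has_integral_divide) simp
qed

lemma nev_S_example_fn_div_le:
  assumes "r < 1"
  shows "nev_S example_fn s * ennreal (1 / s) * indicator {0<..<r} s
           \<le> ennreal (if s \<in> {0..1} then T_majorant s else 0)"
proof (cases "s \<in> {0<..<r}")
  case False
  then show ?thesis by simp
next
  case True
  then have s: "0 < s" "s < 1" using assms by auto
  have "s powr (-3/4) = s powr (1/4) * s powr (-1)"
    by (subst powr_add[symmetric]) simp
  also have "\<dots> = s powr (1/4) * (1 / s)"
    using s by simp
  finally have s_quarter: "s powr (1/4) * (1 / s) = s powr (-3/4)" ..
  have "nev_S example_fn s * ennreal (1 / s)
          \<le> ennreal (s powr (1/4) * (1 - s) powr (-3/4) / (6 * pi)) * ennreal (1 / s)"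
    by (intro mult_right_mono nev_S_example_fn_le s) auto
  also have "\<dots> = ennreal (s powr (1/4) * (1 - s) powr (-3/4) / (6 * pi) * (1 / s))"
    using s by (intro ennreal_mult[symmetric]) auto
  also have "\<dots> = ennreal (s powr (-3/4) * (1 - s) powr (-3/4) / (6 * pi))"
    unfolding s_quarter[symmetric] by (simp add: field_simps)
  also have "\<dots> \<le> ennreal (T_majorant s)"
    using powr_product_le_sum[OF s] unfolding T_majorant_def
    by (intro ennreal_leI) (simp add: field_simps)
  finally show ?thesis using True s by simp
qed

lemma nev_T_example_fn_le:
  assumes "r < 1"
  shows "nev_T example_fn r \<le> ennreal (8 / (3 * pi))"
proof -
  have "nev_T example_fn r \<le> (\<integral>\<^sup>+s. ennreal (if s \<in> {0..1} then T_majorant s else 0) \<partial>lborel)"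
    unfolding nev_T_def by (intro nn_integral_mono nev_S_example_fn_div_le assms)
  also have "\<dots> = ennreal (8 / (3 * pi))"
  proof (rule nn_integral_interval_eq[OF T_majorant_has_integral])
    show "T_majorant \<in> borel_measurable borel"
      unfolding T_majorant_def by measurable
  qed (simp add: T_majorant_def)
  finally show ?thesis .
qed

theorem mainTheorem13:
  shows "\<exists>(f :: complex \<Rightarrow> complex) (\<theta> :: real).
           meromorphic_disc f \<and> bounded_characteristic f \<and>
           filterlim (\<lambda>\<rho>. L_S f \<theta> \<rho> / \<rho>) at_top at_top \<and>
           (\<lambda>\<rho>. L_S f \<theta> \<rho>) \<notin> O(\<lambda>\<rho>. \<rho>)"
proof (intro exI conjI)
  show "meromorphic_disc example_fn"
    unfolding meromorphic_disc_def using example_fn_holomorphic by auto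
  show "bounded_characteristic example_fn"
    unfolding bounded_characteristic_def using nev_T_example_fn_le by blast
  show "filterlim (\<lambda>\<rho>. L_S example_fn 0 \<rho> / \<rho>) at_top at_top"
    by (rule L_S_example_fn_superlinear)
  then show "(\<lambda>\<rho>. L_S example_fn 0 \<rho>) \<notin> O(\<lambda>\<rho>. \<rho>)"
    by (rule superlinear_not_bigo)
qed

end
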